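(* In the two-parallel-path setting with the linear decision rule, suppose the inputs $f_s(t),b_d(t)$ are positive and non-decreasing in $t$, all initial pheromone levels are positive, and the initial flows at vertices other than $s,d$ satisfy $f_v(0)\le f_s(0)$, $b_v(0)\le b_d(0)$. Then for every edge $(u,v)\in E$ and every integer $t\ge0$ with $$t\ \ge\ T_1:=\max_{(u,v)\in E}\frac{\log\!\big(p_{uv}(0)/(f_s(0)+b_d(0))\big)}{\log(1/\delta)},$$ we have $p_{uv}(t)\le\dfrac{2\,(f_s(t)+b_d(t))}{1-\delta}$.
   Context: Model (linear decision rule). Directed graph $G=(V,E)$, source $s$, destination $d$, discrete time; pheromone $p_{uv}(t)$, forward flows $f_v(t)$, backward flows $b_v(t)$; leakages $l_v\in[0,1]$; decay $\delta\in(0,1)$; exogenous inputs $f_s(t),b_d(t)$. Edge flows: $f_{uv}(t)=f_u(t)p_{uv}(t)/\sum_{z:(u,z)\in E}p_{uz}(t)$, $b_{uv}(t)=b_v(t)p_{uv}(t)/\sum_{z:(z,v)\in E}p_{zv}(t)$ (at a vertex with a single outgoing, resp. incoming, edge the whole flow goes along it). Updates: $f_v(t+1)=(1-l_v)\sum_{z:(z,v)\in E}f_{zv}(t)$ for $v\neq s$, $b_u(t+1)=(1-l_u)\sum_{z:(u,z)\in E}b_{uz}(t)$ for $u\ne d$, $p_{uv}(t+1)=\delta(p_{uv}(t)+f_{uv}(t)+b_{uv}(t))$. Two parallel paths: $G$ is the union of directed paths $P_1,P_2$ from $s$ to $d$ sharing only $s,d$. *)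

theory Defs
  imports Complex_Main
begin

definition path_edges :: "'a list \<Rightarrow> ('a \<times> 'a) set" where
  "path_edges P = set (zip P (tl P))"

definition two_parallel_paths ::
  "'a list \<Rightarrow> 'a list \<Rightarrow> 'a \<Rightarrow> 'a \<Rightarrow> ('a \<times> 'a) set \<Rightarrow> bool" where
  "two_parallel_paths P1 P2 s d E \<longleftrightarrow>
     s \<noteq> d \<and> P1 \<noteq> P2 \<and>
     length P1 \<ge> 2 \<and> length P2 \<ge> 2 \<and>
     distinct P1 \<and> distinct P2 \<and>
     hd P1 = s \<and> last P1 = d \<and> hd P2 = s \<and> last P2 = d \<and>
     set P1 \<inter> set P2 = {s, d} \<and>
     E = path_edges P1 \<union> path_edges P2"

definition vertices :: "('a \<times> 'a) set \<Rightarrow> 'a set" where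
  "vertices E = fst ` E \<union> snd ` E"

definition fwd_edge_flow ::
  "('a \<times> 'a) set \<Rightarrow> (nat \<Rightarrow> 'a \<times> 'a \<Rightarrow> real) \<Rightarrow> (nat \<Rightarrow> 'a \<Rightarrow> real) \<Rightarrow> nat \<Rightarrow> 'a \<Rightarrow> 'a \<Rightarrow> real" where
  "fwd_edge_flow E p f t u v =
     (if card {z. (u, z) \<in> E} = 1 then f t u
      else f t u * p t (u, v) / (\<Sum>z\<in>{z. (u, z) \<in> E}. p t (u, z)))"

definition bwd_edge_flow ::
  "('a \<times> 'a) set \<Rightarrow> (nat \<Rightarrow> 'a \<times> 'a \<Rightarrow> real) \<Rightarrow> (nat \<Rightarrow> 'a \<Rightarrow> real) \<Rightarrow> nat \<Rightarrow> 'a \<Rightarrow> 'a \<Rightarrow> real" where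
  "bwd_edge_flow E p b t u v =
     (if card {z. (z, v) \<in> E} = 1 then b t v
      else b t v * p t (u, v) / (\<Sum>z\<in>{z. (z, v) \<in> E}. p t (z, v)))"

definition model_dynamics ::
  "('a \<times> 'a) set \<Rightarrow> 'a \<Rightarrow> 'a \<Rightarrow> ('a \<Rightarrow> real) \<Rightarrow> real \<Rightarrow>
   (nat \<Rightarrow> 'a \<times> 'a \<Rightarrow> real) \<Rightarrow> (nat \<Rightarrow> 'a \<Rightarrow> real) \<Rightarrow> (nat \<Rightarrow> 'a \<Rightarrow> real) \<Rightarrow> bool" where
  "model_dynamics E s d l \<delta> p f b \<longleftrightarrow>
     (\<forall>t. \<forall>v\<in>vertices E - {s}.
        f (Suc t) v = (1 - l v) * (\<Sum>z\<in>{z. (z, v) \<in> E}. fwd_edge_flow E p f t z v)) \<and>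
     (\<forall>t. \<forall>u\<in>vertices E - {d}.
        b (Suc t) u = (1 - l u) * (\<Sum>z\<in>{z. (u, z) \<in> E}. bwd_edge_flow E p b t u z)) \<and>
     (\<forall>t. \<forall>(u, v)\<in>E.
        p (Suc t) (u, v) = \<delta> * (p t (u, v) + fwd_edge_flow E p f t u v + bwd_edge_flow E p b t u v))"

end

theory Submission
  imports Defs
begin

(* Every vertex other than s, d has a single predecessor and a single successor, and the
   leakage only removes flow; since the inputs f_s, b_d are non-decreasing, by induction all
   vertex flows stay below the current inputs, and hence so do the edge flows, whatever the
   pheromones. Writing c(t) = f_s(t) + b_d(t), unrolling p(t+1) = \<delta>(p(t) + f_uv(t) + b_uv(t))
   gives p(t) \<le> \<delta>^t p(0) + c(t) \<delta>/(1 - \<delta>), and t \<ge> T_1 means exactly \<delta>^t p(0) \<le> c(0) \<le> c(t).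
   This yields p(t) \<le> c(t)/(1 - \<delta>), half of the stated bound. *)

lemma path_edges_iff_nth:
  "(a, v) \<in> path_edges P \<longleftrightarrow> (\<exists>n. Suc n < length P \<and> a = P ! n \<and> v = P ! Suc n)"
  unfolding path_edges_def in_set_zip by (auto simp: nth_tl Suc_less_eq2 less_diff_conv)

lemma path_edges_in_unique:
  assumes "distinct P" "(a, v) \<in> path_edges P" "(a', v) \<in> path_edges P"
  shows "a = a'"
  using assms by (auto simp: path_edges_iff_nth nth_eq_iff_index_eq)

lemma path_edges_out_unique:
  assumes "distinct P" "(u, a) \<in> path_edges P" "(u, a') \<in> path_edges P"
  shows "a = a'"
  using assms by (auto simp: path_edges_iff_nth nth_eq_iff_index_eq)

lemma path_edges_in_set:
  assumes "(a, v) \<in> path_edges P"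
  shows "a \<in> set P" "v \<in> set P"
  using assms by (auto simp: path_edges_iff_nth)

lemma path_edges_target_ne_hd:
  assumes "distinct P" "(a, v) \<in> path_edges P"
  shows "v \<noteq> hd P"
proof -
  have "v \<in> set (tl P)" using assms(2) unfolding path_edges_def by (rule set_zip_rightD)
  moreover have "hd P \<notin> set (tl P)" using assms(1) by (cases P) auto
  ultimately show ?thesis by blast
qed

lemma path_edges_source_ne_last:
  assumes "distinct P" "(a, v) \<in> path_edges P"
  shows "a \<noteq> last P"
proof -
  from assms(2) obtain n where "Suc n < length P" "a = P ! n"
    by (auto simp: path_edges_iff_nth)
  moreover have "last P = P ! (length P - 1)"
    using \<open>Suc n < length P\<close> by (intro last_conv_nth) auto
  ultimately show ?thesis using assms(1) by (simp add: nth_eq_iff_index_eq)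
qed

(* These hold for any union of internally disjoint s-d paths, not just two. *)
locale parallel_paths_graph =
  fixes E :: "('a \<times> 'a) set" and s d :: 'a
  assumes finite_edges: "finite E"
    and no_edge_into_source: "(a, c) \<in> E \<Longrightarrow> c \<noteq> s"
    and no_edge_out_of_dest: "(a, c) \<in> E \<Longrightarrow> a \<noteq> d"
    and in_neighbour_unique: "x \<noteq> d \<Longrightarrow> (z, x) \<in> E \<Longrightarrow> (z', x) \<in> E \<Longrightarrow> z = z'"
    and out_neighbour_unique: "x \<noteq> s \<Longrightarrow> (x, z) \<in> E \<Longrightarrow> (x, z') \<in> E \<Longrightarrow> z = z'"

lemma two_parallel_paths_imp_parallel_paths_graph:
  assumes G: "two_parallel_paths P1 P2 s d E"
  shows "parallel_paths_graph E s d"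
proof -
  have E: "E = path_edges P1 \<union> path_edges P2"
    and dist: "distinct P1" "distinct P2"
    and ends: "hd P1 = s" "hd P2 = s" "last P1 = d" "last P2 = d"
    and inter: "set P1 \<inter> set P2 = {s, d}"
    using G unfolding two_parallel_paths_def by auto
  have no_in_s: "c \<noteq> s" if "(a, c) \<in> E" for a c
    using that path_edges_target_ne_hd[OF dist(1)] path_edges_target_ne_hd[OF dist(2)]
    by (auto simp: E ends)
  have no_out_d: "a \<noteq> d" if "(a, c) \<in> E" for a c
    using that path_edges_source_ne_last[OF dist(1)] path_edges_source_ne_last[OF dist(2)]
    by (auto simp: E ends)
  have one_path: "e \<in> path_edges P1 \<and> e' \<in> path_edges P1 \<or> e \<in> path_edges P2 \<and> e' \<in> path_edges P2"
    if "e \<in> E" "e' \<in> E" "x \<notin> {s, d}" "x \<in> {fst e, snd e}" "x \<in> {fst e', snd e'}" for e e' x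
    using that inter path_edges_in_set[of "fst e" "snd e"] path_edges_in_set[of "fst e'" "snd e'"]
    unfolding E by (cases e, cases e') fastforce
  show ?thesis
  proof
    show "finite E" unfolding E path_edges_def by simp
  next
    fix x z z' assume "x \<noteq> d" "(z, x) \<in> E" "(z', x) \<in> E"
    then show "z = z'"
      using one_path[of "(z, x)" "(z', x)" x] no_in_s path_edges_in_unique[OF dist(1)]
        path_edges_in_unique[OF dist(2)] by auto
  next
    fix x z z' assume "x \<noteq> s" "(x, z) \<in> E" "(x, z') \<in> E"
    then show "z = z'"
      using one_path[of "(x, z)" "(x, z')" x] no_out_d path_edges_out_unique[OF dist(1)]
        path_edges_out_unique[OF dist(2)] by auto
  qed (use no_in_s no_out_d in auto)
qed

lemma mult_fraction_of_sum_bounds: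
  fixes g :: "'b \<Rightarrow> real"
  assumes "finite A" "x \<in> A" "\<And>z. z \<in> A \<Longrightarrow> 0 < g z" "0 \<le> c"
  shows "0 \<le> c * g x / sum g A \<and> c * g x / sum g A \<le> c"
proof -
  have le: "g x \<le> sum g A"
    using assms by (intro member_le_sum) (auto intro: less_imp_le)
  with assms have "0 < sum g A" by (meson less_le_trans)
  moreover have "c * g x \<le> c * sum g A" using le assms(4) by (rule mult_left_mono)
  ultimately show ?thesis using assms by (auto simp: divide_le_eq less_imp_le)
qed

lemma fwd_edge_flow_bounds:
  assumes "finite {z. (u, z) \<in> E}" "(u, v) \<in> E" "\<And>z. (u, z) \<in> E \<Longrightarrow> 0 < p t (u, z)"
    and "0 \<le> f t u"
  shows "0 \<le> fwd_edge_flow E p f t u v \<and> fwd_edge_flow E p f t u v \<le> f t u"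
  using assms mult_fraction_of_sum_bounds[of "{z. (u, z) \<in> E}" v "\<lambda>z. p t (u, z)" "f t u"]
  by (simp add: fwd_edge_flow_def)

lemma bwd_edge_flow_bounds:
  assumes "finite {z. (z, v) \<in> E}" "(u, v) \<in> E" "\<And>z. (z, v) \<in> E \<Longrightarrow> 0 < p t (z, v)"
    and "0 \<le> b t v"
  shows "0 \<le> bwd_edge_flow E p b t u v \<and> bwd_edge_flow E p b t u v \<le> b t v"
  using assms mult_fraction_of_sum_bounds[of "{z. (z, v) \<in> E}" u "\<lambda>z. p t (z, v)" "b t v"]
  by (simp add: bwd_edge_flow_def)

lemma sum_subsingleton_bounds:
  fixes g :: "'b \<Rightarrow> real"
  assumes "\<And>z z'. z \<in> A \<Longrightarrow> z' \<in> A \<Longrightarrow> z = z'" "\<And>z. z \<in> A \<Longrightarrow> 0 \<le> g z \<and> g z \<le> c"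
    and "0 \<le> c"
  shows "0 \<le> sum g A \<and> sum g A \<le> c"
proof (cases "A = {}")
  case False
  then obtain z where "A = {z}" using assms(1) by blast
  then show ?thesis using assms(2) by simp
qed (use assms(3) in simp)

locale linear_rule_model = parallel_paths_graph E s d
  for E :: "('a \<times> 'a) set" and s d :: 'a +
  fixes l :: "'a \<Rightarrow> real" and \<delta> :: real
    and p :: "nat \<Rightarrow> 'a \<times> 'a \<Rightarrow> real" and f b :: "nat \<Rightarrow> 'a \<Rightarrow> real"
  assumes leak: "\<And>x. x \<in> vertices E \<Longrightarrow> 0 \<le> l x \<and> l x \<le> 1"
    and delta: "0 < \<delta>" "\<delta> < 1"
    and dyn: "model_dynamics E s d l \<delta> p f b"
    and fs_pos: "\<And>\<tau>. 0 < f \<tau> s" and fs_mono: "mono (\<lambda>\<tau>. f \<tau> s)"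
    and bd_pos: "\<And>\<tau>. 0 < b \<tau> d" and bd_mono: "mono (\<lambda>\<tau>. b \<tau> d)"
    and p0_pos: "\<And>e. e \<in> E \<Longrightarrow> 0 < p 0 e"
    and f0: "\<And>x. x \<in> vertices E - {s, d} \<Longrightarrow> 0 \<le> f 0 x \<and> f 0 x \<le> f 0 s"
    and b0: "\<And>x. x \<in> vertices E - {s, d} \<Longrightarrow> 0 \<le> b 0 x \<and> b 0 x \<le> b 0 d"
begin

definition bounded_state :: "nat \<Rightarrow> bool" where
  "bounded_state t \<longleftrightarrow> (\<forall>e\<in>E. 0 < p t e) \<and>
     (\<forall>x\<in>vertices E - {d}. 0 \<le> f t x \<and> f t x \<le> f t s) \<and>
     (\<forall>x\<in>vertices E - {s}. 0 \<le> b t x \<and> b t x \<le> b t d)"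

lemma edge_in_vertices: "(u, v) \<in> E \<Longrightarrow> u \<in> vertices E \<and> v \<in> vertices E"
  unfolding vertices_def by force

lemma finite_out_neighbours: "finite {z. (u, z) \<in> E}"
  by (rule finite_subset[of _ "snd ` E"]) (force, simp add: finite_edges)

lemma finite_in_neighbours: "finite {z. (z, v) \<in> E}"
  by (rule finite_subset[of _ "fst ` E"]) (force, simp add: finite_edges)

lemma edge_flows_bounded:
  assumes "bounded_state t" "(u, v) \<in> E"
  shows "0 \<le> fwd_edge_flow E p f t u v \<and> fwd_edge_flow E p f t u v \<le> f t s"
    and "0 \<le> bwd_edge_flow E p b t u v \<and> bwd_edge_flow E p b t u v \<le> b t d"
proof -
  have p: "\<forall>e\<in>E. 0 < p t e" and fu: "0 \<le> f t u \<and> f t u \<le> f t s"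
    and bv: "0 \<le> b t v \<and> b t v \<le> b t d"
    using assms edge_in_vertices[OF assms(2)] no_edge_out_of_dest[OF assms(2)]
      no_edge_into_source[OF assms(2)] unfolding bounded_state_def by auto
  show "0 \<le> fwd_edge_flow E p f t u v \<and> fwd_edge_flow E p f t u v \<le> f t s"
    using fwd_edge_flow_bounds[OF finite_out_neighbours assms(2)] p fu by force
  show "0 \<le> bwd_edge_flow E p b t u v \<and> bwd_edge_flow E p b t u v \<le> b t d"
    using bwd_edge_flow_bounds[OF finite_in_neighbours assms(2)] p bv by force
qed

lemma fwd_vertex_flow_bounded_Suc:
  assumes "bounded_state t" "x \<in> vertices E - {d}"
  shows "0 \<le> f (Suc t) x \<and> f (Suc t) x \<le> f (Suc t) s"
proof (cases "x = s")
  case False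
  let ?inflow = "\<Sum>z\<in>{z. (z, x) \<in> E}. fwd_edge_flow E p f t z x"
  have step: "f (Suc t) x = (1 - l x) * ?inflow"
    using dyn assms(2) False unfolding model_dynamics_def by blast
  have "0 \<le> ?inflow \<and> ?inflow \<le> f t s"
    using assms in_neighbour_unique edge_flows_bounded(1)[OF assms(1)] fs_pos[of t]
    by (intro sum_subsingleton_bounds) (auto intro: less_imp_le)
  moreover have "0 \<le> 1 - l x \<and> 1 - l x \<le> 1" using leak assms(2) by auto
  moreover have "f t s \<le> f (Suc t) s" using fs_mono by (simp add: mono_def)
  ultimately show ?thesis
    unfolding step by (meson mult_left_le_one_le mult_nonneg_nonneg order_trans)
qed (use fs_pos in \<open>simp add: less_imp_le\<close>)

lemma bwd_vertex_flow_bounded_Suc: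
  assumes "bounded_state t" "x \<in> vertices E - {s}"
  shows "0 \<le> b (Suc t) x \<and> b (Suc t) x \<le> b (Suc t) d"
proof (cases "x = d")
  case False
  let ?outflow = "\<Sum>z\<in>{z. (x, z) \<in> E}. bwd_edge_flow E p b t x z"
  have step: "b (Suc t) x = (1 - l x) * ?outflow"
    using dyn assms(2) False unfolding model_dynamics_def by blast
  have "0 \<le> ?outflow \<and> ?outflow \<le> b t d"
    using assms out_neighbour_unique edge_flows_bounded(2)[OF assms(1)] bd_pos[of t]
    by (intro sum_subsingleton_bounds) (auto intro: less_imp_le)
  moreover have "0 \<le> 1 - l x \<and> 1 - l x \<le> 1" using leak assms(2) by auto
  moreover have "b t d \<le> b (Suc t) d" using bd_mono by (simp add: mono_def)
  ultimately show ?thesis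
    unfolding step by (meson mult_left_le_one_le mult_nonneg_nonneg order_trans)
qed (use bd_pos in \<open>simp add: less_imp_le\<close>)

lemma pheromone_step:
  "(u, v) \<in> E \<Longrightarrow>
    p (Suc t) (u, v) = \<delta> * (p t (u, v) + fwd_edge_flow E p f t u v + bwd_edge_flow E p b t u v)"
  using dyn unfolding model_dynamics_def by blast

lemma bounded_state: "bounded_state t"
proof (induction t)
  case 0
  show ?case
    using p0_pos f0 b0 fs_pos[of 0] bd_pos[of 0] unfolding bounded_state_def by force
next
  case (Suc t)
  have "0 < p (Suc t) (u, v)" if "(u, v) \<in> E" for u v
  proof -
    have "0 < p t (u, v)" using Suc that unfolding bounded_state_def by blast
    then show ?thesis
      using pheromone_step[OF that] edge_flows_bounded[OF Suc that] delta by simp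
  qed
  then show ?case
    using fwd_vertex_flow_bounded_Suc[OF Suc] bwd_vertex_flow_bounded_Suc[OF Suc]
    unfolding bounded_state_def by auto
qed

lemma source_inputs_mono: "\<tau> \<le> \<tau>' \<Longrightarrow> f \<tau> s + b \<tau> d \<le> f \<tau>' s + b \<tau>' d"
  using fs_mono bd_mono by (simp add: mono_def add_mono)

lemma pheromone_bound:
  assumes "e \<in> E"
  shows "p t e \<le> \<delta> ^ t * p 0 e + (f t s + b t d) * \<delta> / (1 - \<delta>)"
proof (induction t)
  case 0
  show ?case using fs_pos[of 0] bd_pos[of 0] delta by simp
next
  case (Suc t)
  obtain u v where e: "e = (u, v)" by force
  have flows: "fwd_edge_flow E p f t u v + bwd_edge_flow E p b t u v \<le> f t s + b t d"
    using edge_flows_bounded[OF bounded_state, of u v t] assms e by auto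
  have "p (Suc t) e = \<delta> * (p t e + fwd_edge_flow E p f t u v + bwd_edge_flow E p b t u v)"
    using pheromone_step assms e by simp
  also have "\<dots> \<le> \<delta> * (\<delta> ^ t * p 0 e + (f t s + b t d) * \<delta> / (1 - \<delta>) + (f t s + b t d))"
    using Suc flows delta by (intro mult_left_mono) auto
  also have "\<dots> = \<delta> ^ Suc t * p 0 e + (f t s + b t d) * \<delta> / (1 - \<delta>)"
    using delta by (simp add: field_simps)
  also have "\<dots> \<le> \<delta> ^ Suc t * p 0 e + (f (Suc t) s + b (Suc t) d) * \<delta> / (1 - \<delta>)"
    using delta source_inputs_mono[of t "Suc t"] by (intro add_left_mono divide_right_mono) auto
  finally show ?case .
qed

lemma pheromone_bounded_after_transient:
  assumes "e \<in> E" "\<delta> ^ t * p 0 e \<le> f 0 s + b 0 d"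
  shows "p t e \<le> (f t s + b t d) / (1 - \<delta>)"
proof -
  have "p t e \<le> \<delta> ^ t * p 0 e + (f t s + b t d) * \<delta> / (1 - \<delta>)"
    using pheromone_bound[OF assms(1)] .
  also have "\<dots> \<le> (f t s + b t d) + (f t s + b t d) * \<delta> / (1 - \<delta>)"
    using assms(2) source_inputs_mono[of 0 t] by simp
  also have "\<dots> = (f t s + b t d) / (1 - \<delta>)"
    using delta by (simp add: field_simps)
  finally show ?thesis .
qed

end

lemma power_mult_le_if_log_ratio_le:
  fixes \<delta> x c :: real
  assumes "0 < \<delta>" "\<delta> < 1" "0 < x" "0 < c" "ln (x / c) / ln (1 / \<delta>) \<le> real t"
  shows "\<delta> ^ t * x \<le> c"
proof -
  have "0 < ln (1 / \<delta>)" using assms(1,2) by simp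
  with assms(5) have "ln (x / c) \<le> real t * ln (1 / \<delta>)"
    by (simp add: divide_le_eq)
  then have "ln x - ln c \<le> - (real t * ln \<delta>)"
    using assms(1,3,4) by (simp add: ln_div)
  then have "ln (\<delta> ^ t * x) \<le> ln c"
    using assms(1,3) by (simp add: ln_mult ln_realpow)
  then show ?thesis using assms(1,3,4) by simp
qed

theorem mainTheorem12:
  fixes P1 P2 :: "'a list" and s d :: 'a and E :: "('a \<times> 'a) set"
    and l :: "'a \<Rightarrow> real" and \<delta> :: real
    and p :: "nat \<Rightarrow> 'a \<times> 'a \<Rightarrow> real" and f b :: "nat \<Rightarrow> 'a \<Rightarrow> real"
    and t :: nat and u v :: 'a
  assumes G: "two_parallel_paths P1 P2 s d E"
    and leak: "\<And>x. x \<in> vertices E \<Longrightarrow> 0 \<le> l x \<and> l x \<le> 1"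
    and delta: "0 < \<delta>" "\<delta> < 1"
    and dyn: "model_dynamics E s d l \<delta> p f b"
    and fs_pos: "\<And>\<tau>. 0 < f \<tau> s" and fs_mono: "mono (\<lambda>\<tau>. f \<tau> s)"
    and bd_pos: "\<And>\<tau>. 0 < b \<tau> d" and bd_mono: "mono (\<lambda>\<tau>. b \<tau> d)"
    and p0_pos: "\<And>e. e \<in> E \<Longrightarrow> 0 < p 0 e"
    and f0: "\<And>x. x \<in> vertices E - {s, d} \<Longrightarrow> 0 \<le> f 0 x \<and> f 0 x \<le> f 0 s"
    and b0: "\<And>x. x \<in> vertices E - {s, d} \<Longrightarrow> 0 \<le> b 0 x \<and> b 0 x \<le> b 0 d"
    and edge: "(u, v) \<in> E"
    and T1: "real t \<ge> Max ((\<lambda>e. ln (p 0 e / (f 0 s + b 0 d)) / ln (1 / \<delta>)) ` E)"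
  shows "p t (u, v) \<le> 2 * (f t s + b t d) / (1 - \<delta>)"
proof -
  interpret linear_rule_model E s d l \<delta> p f b
    using two_parallel_paths_imp_parallel_paths_graph[OF G] assms
    by (intro linear_rule_model.intro linear_rule_model_axioms.intro) auto
  have "ln (p 0 (u, v) / (f 0 s + b 0 d)) / ln (1 / \<delta>) \<le> real t"
    using Max_ge[OF finite_imageI[OF finite_edges]] edge T1 by (meson image_eqI order_trans)
  then have "\<delta> ^ t * p 0 (u, v) \<le> f 0 s + b 0 d"
    using delta p0_pos[OF edge] fs_pos[of 0] bd_pos[of 0]
    by (intro power_mult_le_if_log_ratio_le) auto
  then have "p t (u, v) \<le> (f t s + b t d) / (1 - \<delta>)"
    using pheromone_bounded_after_transient edge by blast
  also have "\<dots> \<le> 2 * (f t s + b t d) / (1 - \<delta>)"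
    using delta fs_pos[of t] bd_pos[of t] by (simp add: divide_right_mono)
  finally show ?thesis .
qed

end
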